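(* Let $r\ge2$ and let $n_{kj}$ ($1\le j<k\le r$) be nonnegative integers, with $p_k=\sum_{j<k}n_{kj}$ and $q_j=\sum_{k>j}n_{kj}$. The following are equivalent: (i) there exists $m\in\{0,1\}$ such that $\frac{\pi}{4}\sum_{1\le j<k\le r}\varepsilon_j\delta_kn_{kj}\equiv m\pi\pmod{2\pi}$ for all $\boldsymbol{\varepsilon},\boldsymbol{\delta}\in\{1,-1\}^r$; (ii) every $n_{kj}$ is even, and every $p_k$ and every $q_j$ is divisible by $4$.
   Context: Here $\boldsymbol{\varepsilon}=(\varepsilon_1,\dots,\varepsilon_r)$ and $\boldsymbol{\delta}=(\delta_1,\dots,\delta_r)$ range over $\{1,-1\}^r$. (In the paper, $n_{kj}=\dim V_{kj}$ are the structure constants of a homogeneous cone, but the statement is purely arithmetic.) *)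

theory Defs
  imports Complex_Main
begin

definition real_cong :: "real \<Rightarrow> real \<Rightarrow> real \<Rightarrow> bool" where
  "real_cong x y c \<longleftrightarrow> (\<exists>t::int. x - y = of_int t * c)"

definition sign_vec :: "nat \<Rightarrow> (nat \<Rightarrow> int) \<Rightarrow> bool" where
  "sign_vec r e \<longleftrightarrow> (\<forall>i\<in>{1..r}. e i = 1 \<or> e i = -1)"

end

theory Submission
  imports Defs
begin

text \<open>Let S(e,d) be the integer sum of e_j d_k n_kj over j < k, so that (i) says
  S(e,d) = 4m (mod 8) for all sign vectors. From
  e_j d_k = 1 - (1 - e_j) - (1 - d_k) + (1 - e_j)(1 - d_k), where each factor 1 - e_j is 0 or 2,
  S(e,d) = S(1,1) - sum_j (1 - e_j) q_j - sum_k (1 - d_k) p_k + sum (1 - e_j)(1 - d_k) n_kj.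
  Under (ii) every correction term is divisible by 8, and S(1,1) = sum_k p_k is divisible by 4.
  Conversely, flipping a single e_j, a single d_k, or both changes S by -2q_j, -2p_k and
  -2q_j - 2p_k + 4n_kj, and these must vanish modulo 8.\<close>

lemma sum_lower_triangle_swap:
  fixes f :: "nat \<Rightarrow> nat \<Rightarrow> 'a::comm_monoid_add"
  shows "(\<Sum>k\<in>{1..r}. \<Sum>j\<in>{1..<k}. f k j) = (\<Sum>j\<in>{1..r}. \<Sum>k\<in>{j<..r}. f k j)"
proof -
  have "(\<Sum>k\<in>{1..r}. \<Sum>j\<in>{1..<k}. f k j) = (\<Sum>k\<in>{1..r}. \<Sum>j\<in>{j\<in>{1..r}. j < k}. f k j)"
    by (intro sum.cong refl) auto
  also have "\<dots> = (\<Sum>j\<in>{1..r}. \<Sum>k\<in>{k\<in>{1..r}. j < k}. f k j)"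
    by (rule sum.swap_restrict) auto
  also have "\<dots> = (\<Sum>j\<in>{1..r}. \<Sum>k\<in>{j<..r}. f k j)"
    by (intro sum.cong refl) auto
  finally show ?thesis .
qed

lemma real_cong_pi_quarter_iff:
  "real_cong (pi / 4 * of_int x) (real m * pi) (2 * pi) \<longleftrightarrow> 8 dvd (x - 4 * int m)"
proof -
  have "pi / 4 * of_int x - real m * pi = of_int t * (2 * pi) \<longleftrightarrow> x - 4 * int m = 8 * t"
    for t :: int
  proof -
    have "pi / 4 * of_int x - real m * pi - of_int t * (2 * pi)
          = pi / 4 * of_int (x - 4 * int m - 8 * t)"
      by (simp add: algebra_simps)
    then show ?thesis
      by (smt (verit, best) divide_eq_0_iff mult_eq_0_iff of_int_eq_0_iff pi_neq_zero)
  qed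
  then show ?thesis
    unfolding real_cong_def dvd_def by (metis mult.commute)
qed

lemma sign_vec_two_dvd:
  assumes "sign_vec r e" "i \<in> {1..r}"
  shows "2 dvd (1 - e i)"
proof -
  from assms have "e i = 1 \<or> e i = -1"
    unfolding sign_vec_def by blast
  then show ?thesis by auto
qed

definition flip_at :: "nat \<Rightarrow> nat \<Rightarrow> int" where
  "flip_at a i = (if i = a then -1 else 1)"

lemma sign_vec_flip_at: "sign_vec r (flip_at a)"
  unfolding sign_vec_def flip_at_def by simp

lemma sign_vec_one: "sign_vec r (\<lambda>_. 1)"
  unfolding sign_vec_def by simp

lemma sum_one_minus_flip_at:
  fixes g :: "nat \<Rightarrow> int"
  assumes "finite A" "a \<in> A"
  shows "(\<Sum>i\<in>A. (1 - flip_at a i) * g i) = 2 * g a"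
proof -
  have "(\<Sum>i\<in>A. (1 - flip_at a i) * g i) = (\<Sum>i\<in>A. if i = a then 2 * g i else 0)"
    by (intro sum.cong) (auto simp: flip_at_def)
  with assms show ?thesis by (simp add: sum.delta)
qed

definition tri_form :: "nat \<Rightarrow> (nat \<Rightarrow> nat \<Rightarrow> nat) \<Rightarrow> (nat \<Rightarrow> int) \<Rightarrow> (nat \<Rightarrow> int) \<Rightarrow> int" where
  "tri_form r n e d = (\<Sum>k\<in>{1..r}. \<Sum>j\<in>{1..<k}. e j * d k * int (n k j))"

definition row_sum :: "(nat \<Rightarrow> nat \<Rightarrow> nat) \<Rightarrow> nat \<Rightarrow> int" where
  "row_sum n k = int (\<Sum>j\<in>{1..<k}. n k j)"

definition col_sum :: "nat \<Rightarrow> (nat \<Rightarrow> nat \<Rightarrow> nat) \<Rightarrow> nat \<Rightarrow> int" where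
  "col_sum r n j = int (\<Sum>k\<in>{j<..r}. n k j)"

lemma tri_form_expand:
  "tri_form r n e d = tri_form r n (\<lambda>_. 1) (\<lambda>_. 1)
     - (\<Sum>j\<in>{1..r}. (1 - e j) * col_sum r n j)
     - (\<Sum>k\<in>{1..r}. (1 - d k) * row_sum n k)
     + (\<Sum>k\<in>{1..r}. \<Sum>j\<in>{1..<k}. (1 - e j) * (1 - d k) * int (n k j))"
proof -
  have "(\<Sum>j\<in>{1..r}. (1 - e j) * col_sum r n j)
      = (\<Sum>j\<in>{1..r}. \<Sum>k\<in>{j<..r}. (1 - e j) * int (n k j))"
    by (simp add: col_sum_def sum_distrib_left)
  also have "\<dots> = (\<Sum>k\<in>{1..r}. \<Sum>j\<in>{1..<k}. (1 - e j) * int (n k j))"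
    by (rule sum_lower_triangle_swap[symmetric])
  finally have cols: "(\<Sum>j\<in>{1..r}. (1 - e j) * col_sum r n j)
      = (\<Sum>k\<in>{1..r}. \<Sum>j\<in>{1..<k}. (1 - e j) * int (n k j))" .
  have rows: "(\<Sum>k\<in>{1..r}. (1 - d k) * row_sum n k)
      = (\<Sum>k\<in>{1..r}. \<Sum>j\<in>{1..<k}. (1 - d k) * int (n k j))"
    by (simp add: row_sum_def sum_distrib_left)
  have "e j * d k * x = x - (1 - e j) * x - (1 - d k) * x + (1 - e j) * (1 - d k) * x"
    for j k and x :: int
    by (simp add: algebra_simps)
  then show ?thesis
    unfolding cols rows tri_form_def by (simp add: sum.distrib sum_subtractf)
qed

lemma tri_form_one_one: "tri_form r n (\<lambda>_. 1) (\<lambda>_. 1) = (\<Sum>k\<in>{1..r}. row_sum n k)"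
  unfolding tri_form_def row_sum_def by simp

lemma tri_form_flip_flip_correction:
  assumes "1 \<le> j0" "j0 < k0" "k0 \<le> r"
  shows "(\<Sum>k\<in>{1..r}. \<Sum>j\<in>{1..<k}. (1 - flip_at j0 j) * (1 - flip_at k0 k) * int (n k j))
     = 4 * int (n k0 j0)"
proof -
  have "(\<Sum>j\<in>{1..<k}. (1 - flip_at j0 j) * (1 - flip_at k0 k) * int (n k j))
      = (if k = k0 then 4 * int (n k0 j0) else 0)" for k
  proof (cases "k = k0")
    case True
    have "(\<Sum>j\<in>{1..<k}. (1 - flip_at j0 j) * (1 - flip_at k0 k) * int (n k j))
        = (\<Sum>j\<in>{1..<k}. if j = j0 then 4 * int (n k j) else 0)"
      using True by (intro sum.cong refl) (simp add: flip_at_def)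
    with True assms show ?thesis by (simp add: sum.delta)
  qed (simp add: flip_at_def)
  with assms show ?thesis by (simp add: sum.delta)
qed

lemma tri_form_mod8_invariant_imp_parity:
  assumes inv: "\<And>e d. sign_vec r e \<Longrightarrow> sign_vec r d \<Longrightarrow> 8 dvd (tri_form r n e d - tri_form r n (\<lambda>_. 1) (\<lambda>_. 1))"
  shows "(\<forall>k j. 1 \<le> j \<and> j < k \<and> k \<le> r \<longrightarrow> even (n k j)) \<and>
         (\<forall>k\<in>{1..r}. (4::nat) dvd (\<Sum>j\<in>{1..<k}. n k j)) \<and>
         (\<forall>j\<in>{1..r}. (4::nat) dvd (\<Sum>k\<in>{j<..r}. n k j))"
proof -
  have flip_e: "8 dvd 2 * col_sum r n j" if "j \<in> {1..r}" for j
    using inv[OF sign_vec_flip_at sign_vec_one, of j] tri_form_expand[of r n "flip_at j" "\<lambda>_. 1"]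
      sum_one_minus_flip_at[OF finite_atLeastAtMost that]
    by simp
  have flip_d: "8 dvd 2 * row_sum n k" if "k \<in> {1..r}" for k
    using inv[OF sign_vec_one sign_vec_flip_at, of k] tri_form_expand[of r n "\<lambda>_. 1" "flip_at k"]
      sum_one_minus_flip_at[OF finite_atLeastAtMost that]
    by simp
  have "even (n k j)" if jk: "1 \<le> j" "j < k" "k \<le> r" for k j
  proof -
    have "8 dvd 4 * int (n k j) - 2 * row_sum n k - 2 * col_sum r n j"
      using inv[OF sign_vec_flip_at sign_vec_flip_at, of j k]
        tri_form_expand[of r n "flip_at j" "flip_at k"] tri_form_flip_flip_correction[OF jk]
        sum_one_minus_flip_at[of "{1..r}" j] sum_one_minus_flip_at[of "{1..r}" k] jk
      by simp
    moreover have "8 dvd 2 * col_sum r n j" "8 dvd 2 * row_sum n k"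
      using flip_e flip_d jk by simp_all
    ultimately have "even (int (n k j))"
      by presburger
    then show ?thesis by simp
  qed
  moreover have "4 dvd row_sum n k" if "k \<in> {1..r}" for k
    using flip_d[OF that] by presburger
  moreover have "4 dvd col_sum r n j" if "j \<in> {1..r}" for j
    using flip_e[OF that] by presburger
  ultimately show ?thesis
    unfolding row_sum_def col_sum_def by (metis int_dvd_int_iff of_nat_numeral)
qed

lemma parity_imp_tri_form_mod8_invariant:
  assumes even: "\<And>k j. 1 \<le> j \<Longrightarrow> j < k \<Longrightarrow> k \<le> r \<Longrightarrow> even (n k j)"
    and rows: "\<And>k. k \<in> {1..r} \<Longrightarrow> 4 dvd row_sum n k"
    and cols: "\<And>j. j \<in> {1..r} \<Longrightarrow> 4 dvd col_sum r n j"
    and e: "sign_vec r e" and d: "sign_vec r d"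
  shows "8 dvd (tri_form r n e d - tri_form r n (\<lambda>_. 1) (\<lambda>_. 1))"
proof -
  have eight: "8 dvd x * y" if "2 dvd x" "4 dvd y" for x y :: int
    using mult_dvd_mono[OF that] by simp
  have "8 dvd (\<Sum>j\<in>{1..r}. (1 - e j) * col_sum r n j)"
    using eight sign_vec_two_dvd[OF e] cols by (intro dvd_sum) blast
  moreover have "8 dvd (\<Sum>k\<in>{1..r}. (1 - d k) * row_sum n k)"
    using eight sign_vec_two_dvd[OF d] rows by (intro dvd_sum) blast
  moreover have "8 dvd (\<Sum>k\<in>{1..r}. \<Sum>j\<in>{1..<k}. (1 - e j) * (1 - d k) * int (n k j))"
  proof (intro dvd_sum)
    fix k j assume "k \<in> {1..r}" "j \<in> {1..<k}"
    with sign_vec_two_dvd[OF e, of j] sign_vec_two_dvd[OF d, of k] even[of j k]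
    have "2 * 2 * 2 dvd (1 - e j) * (1 - d k) * int (n k j)"
      by (intro mult_dvd_mono) auto
    then show "8 dvd (1 - e j) * (1 - d k) * int (n k j)" by simp
  qed
  ultimately show ?thesis
    using tri_form_expand[of r n e d] by (simp add: dvd_add_left_iff dvd_diff)
qed

lemma four_dvd_imp_eight_dvd_minus_0_or_4:
  fixes x :: int
  assumes "4 dvd x"
  shows "\<exists>m::nat\<in>{0, 1}. 8 dvd (x - 4 * int m)"
proof -
  from assms obtain c where "x = 4 * c" by blast
  then show ?thesis
    by (cases "even c") (auto intro: bexI[of _ 0] bexI[of _ 1] elim!: evenE oddE)
qed

theorem mainTheorem8:
  fixes r :: nat and n :: "nat \<Rightarrow> nat \<Rightarrow> nat"
  assumes "r \<ge> 2"
  shows "(\<exists>m\<in>{0::nat, 1}. \<forall>\<epsilon> \<delta>. sign_vec r \<epsilon> \<longrightarrow> sign_vec r \<delta> \<longrightarrow>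
            real_cong ((pi / 4) * (\<Sum>k\<in>{1..r}. \<Sum>j\<in>{1..<k}. real_of_int (\<epsilon> j * \<delta> k) * real (n k j)))
                      (real m * pi) (2 * pi))
       \<longleftrightarrow> ((\<forall>k j. 1 \<le> j \<and> j < k \<and> k \<le> r \<longrightarrow> even (n k j)) \<and>
            (\<forall>k\<in>{1..r}. (4::nat) dvd (\<Sum>j\<in>{1..<k}. n k j)) \<and>
            (\<forall>j\<in>{1..r}. (4::nat) dvd (\<Sum>k\<in>{j<..r}. n k j)))"
    (is "?i \<longleftrightarrow> ?ii")
proof -
  let ?N = "tri_form r n (\<lambda>_. 1) (\<lambda>_. 1)"
  have "(\<Sum>k\<in>{1..r}. \<Sum>j\<in>{1..<k}. real_of_int (\<epsilon> j * \<delta> k) * real (n k j))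
        = of_int (tri_form r n \<epsilon> \<delta>)" for \<epsilon> \<delta>
    unfolding tri_form_def by simp
  then have i_iff: "?i \<longleftrightarrow> (\<exists>m\<in>{0::nat, 1}. \<forall>\<epsilon> \<delta>. sign_vec r \<epsilon> \<longrightarrow> sign_vec r \<delta> \<longrightarrow>
                     8 dvd (tri_form r n \<epsilon> \<delta> - 4 * int m))"
    by (simp only: real_cong_pi_quarter_iff)
  show ?thesis
  proof
    assume ?i
    then obtain m where m: "\<And>\<epsilon> \<delta>. sign_vec r \<epsilon> \<Longrightarrow> sign_vec r \<delta> \<Longrightarrow> 8 dvd (tri_form r n \<epsilon> \<delta> - 4 * int m)"
      using i_iff by blast
    have "8 dvd (tri_form r n \<epsilon> \<delta> - ?N)" if "sign_vec r \<epsilon>" "sign_vec r \<delta>" for \<epsilon> \<delta>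
      using dvd_diff[OF m[OF that] m[OF sign_vec_one sign_vec_one]] by simp
    then show ?ii
      by (rule tri_form_mod8_invariant_imp_parity)
  next
    assume ii: ?ii
    have rows: "4 dvd row_sum n k" if "k \<in> {1..r}" for k
      using ii that unfolding row_sum_def by (metis int_dvd_int_iff of_nat_numeral)
    have cols: "4 dvd col_sum r n j" if "j \<in> {1..r}" for j
      using ii that unfolding col_sum_def by (metis int_dvd_int_iff of_nat_numeral)
    have "4 dvd ?N"
      unfolding tri_form_one_one using rows by (intro dvd_sum) blast
    then obtain m :: nat where "m \<in> {0, 1}" and N: "8 dvd (?N - 4 * int m)"
      using four_dvd_imp_eight_dvd_minus_0_or_4 by blast
    have "8 dvd (tri_form r n \<epsilon> \<delta> - 4 * int m)" if "sign_vec r \<epsilon>" "sign_vec r \<delta>" for \<epsilon> \<delta>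
      using dvd_add[OF parity_imp_tri_form_mod8_invariant[OF _ rows cols that] N] ii by simp
    with \<open>m \<in> {0, 1}\<close> show ?i
      unfolding i_iff by blast
  qed
qed

end
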